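(* Let $n\ge0$, $h\ge1$, and $t$ an even natural number. Suppose the variety $\mathcal V$ has $n+2$ Gumm terms and satisfies $\alpha(\beta\circ_{2h+1}\alpha\gamma)\subseteq\alpha\beta\circ_t\alpha\gamma$. Then $\mathcal V$ satisfies $$\alpha(\beta\circ_{4h+3}\alpha\gamma)\subseteq\alpha\beta\circ_{t+(4h+2)n}\alpha\gamma,$$ and, more generally, for every $p\ge1$, $\mathcal V$ satisfies $\alpha(\beta\circ_z\alpha\gamma)\subseteq\alpha\beta\circ_{t'}\alpha\gamma$, where $z=2^p(h+1)-1$ and $t'=t+(2^{p+1}-4)hn+(2^{p+1}-2p-2)n$.
   Context: Here $\alpha,\beta,\gamma$ range over congruences of algebras in $\mathcal V$. $\circ$ is relational composition, juxtaposition is intersection. For relations $X,Y$ and $m\ge1$, $X\circ_m Y$ denotes $X\circ Y\circ X\circ\cdots$ with $m$ factors. A variety has $n+2$ Gumm terms if it has ternary terms $p,j_1,\dots,j_{n+1}$ satisfying: $x=j_i(x,y,x)$ for all $i$; $x=p(x,z,z)$; $p(x,x,z)=j_1(x,x,z)$; $j_i(x,z,z)=j_{i+1}(x,z,z)$ for odd $i\le n$; $j_i(x,x,z)=j_{i+1}(x,x,z)$ for even $i\le n$; $j_{n+1}(x,y,z)=z$. *)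

theory Defs
  imports Main
begin

datatype ('f, 'v) trm = Var 'v | App 'f "('f, 'v) trm list"

fun wf_trm :: "('f \<Rightarrow> nat) \<Rightarrow> ('f, 'v) trm \<Rightarrow> bool" where
  "wf_trm ar (Var v) = True"
| "wf_trm ar (App f ts) = (length ts = ar f \<and> (\<forall>s\<in>set ts. wf_trm ar s))"

fun vars_trm :: "('f, 'v) trm \<Rightarrow> 'v set" where
  "vars_trm (Var v) = {v}"
| "vars_trm (App f ts) = (\<Union>s\<in>set ts. vars_trm s)"

record ('f, 'a) alg =
  carrier :: "'a set"
  ops :: "'f \<Rightarrow> 'a list \<Rightarrow> 'a"

fun eval :: "('f, 'a) alg \<Rightarrow> ('v \<Rightarrow> 'a) \<Rightarrow> ('f, 'v) trm \<Rightarrow> 'a" where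
  "eval A \<rho> (Var v) = \<rho> v"
| "eval A \<rho> (App f ts) = ops A f (map (eval A \<rho>) ts)"

definition is_alg :: "('f \<Rightarrow> nat) \<Rightarrow> ('f, 'a) alg \<Rightarrow> bool" where
  "is_alg ar A \<longleftrightarrow> carrier A \<noteq> {} \<and>
     (\<forall>f xs. length xs = ar f \<and> set xs \<subseteq> carrier A \<longrightarrow> ops A f xs \<in> carrier A)"

definition in_var :: "('f \<Rightarrow> nat) \<Rightarrow> (('f, nat) trm \<times> ('f, nat) trm) set \<Rightarrow> ('f, 'a) alg \<Rightarrow> bool" where
  "in_var ar \<Sigma> A \<longleftrightarrow> is_alg ar A \<and>
     (\<forall>(s, t)\<in>\<Sigma>. \<forall>\<rho>. (\<forall>v. \<rho> v \<in> carrier A) \<longrightarrow> eval A \<rho> s = eval A \<rho> t)"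

definition is_cong :: "('f \<Rightarrow> nat) \<Rightarrow> ('f, 'a) alg \<Rightarrow> ('a \<times> 'a) set \<Rightarrow> bool" where
  "is_cong ar A \<theta> \<longleftrightarrow> equiv (carrier A) \<theta> \<and>
     (\<forall>f xs ys. length xs = ar f \<and> length ys = ar f \<and>
        (\<forall>i<ar f. (xs ! i, ys ! i) \<in> \<theta>) \<longrightarrow> (ops A f xs, ops A f ys) \<in> \<theta>)"

text \<open>X \<circ>_m Y = X \<circ> Y \<circ> X \<circ> ... with m factors (m = 0 gives the diagonal).\<close>
fun altc :: "('a \<times> 'a) set \<Rightarrow> ('a \<times> 'a) set \<Rightarrow> nat \<Rightarrow> ('a \<times> 'a) set" where
  "altc X Y 0 = Id"
| "altc X Y (Suc m) = X O altc Y X m"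

definition ev3 :: "('f, 'a) alg \<Rightarrow> ('f, nat) trm \<Rightarrow> 'a \<Rightarrow> 'a \<Rightarrow> 'a \<Rightarrow> 'a" where
  "ev3 A t x y z = eval A (\<lambda>v. if v = 0 then x else if v = 1 then y else z) t"

definition ternary :: "('f \<Rightarrow> nat) \<Rightarrow> ('f, nat) trm \<Rightarrow> bool" where
  "ternary ar t \<longleftrightarrow> wf_trm ar t \<and> vars_trm t \<subseteq> {0, 1, 2}"

definition has_gumm_terms ::
  "'a itself \<Rightarrow> ('f \<Rightarrow> nat) \<Rightarrow> (('f, nat) trm \<times> ('f, nat) trm) set \<Rightarrow> nat \<Rightarrow> bool" where
  "has_gumm_terms _ ar \<Sigma> n \<longleftrightarrow>
    (\<exists>p j. ternary ar p \<and> (\<forall>i\<in>{1..n+1}. ternary ar (j i)) \<and>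
      (\<forall>A :: ('f, 'a) alg. in_var ar \<Sigma> A \<longrightarrow>
        (\<forall>x\<in>carrier A. \<forall>y\<in>carrier A. \<forall>z\<in>carrier A.
          (\<forall>i\<in>{1..n+1}. ev3 A (j i) x y x = x) \<and>
          ev3 A p x z z = x \<and>
          ev3 A p x x z = ev3 A (j 1) x x z \<and>
          (\<forall>i\<in>{1..n}. odd i \<longrightarrow> ev3 A (j i) x z z = ev3 A (j (i+1)) x z z) \<and>
          (\<forall>i\<in>{1..n}. even i \<longrightarrow> ev3 A (j i) x x z = ev3 A (j (i+1)) x x z) \<and>
          ev3 A (j (n+1)) x y z = z)))"

definition sat_incl ::
  "'a itself \<Rightarrow> ('f \<Rightarrow> nat) \<Rightarrow> (('f, nat) trm \<times> ('f, nat) trm) set \<Rightarrow> nat \<Rightarrow> nat \<Rightarrow> bool" where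
  "sat_incl _ ar \<Sigma> k m \<longleftrightarrow>
    (\<forall>A :: ('f, 'a) alg. in_var ar \<Sigma> A \<longrightarrow>
      (\<forall>\<alpha> \<beta> \<gamma>. is_cong ar A \<alpha> \<longrightarrow> is_cong ar A \<beta> \<longrightarrow> is_cong ar A \<gamma> \<longrightarrow>
         \<alpha> \<inter> altc \<beta> (\<alpha> \<inter> \<gamma>) k \<subseteq> altc (\<alpha> \<inter> \<beta>) (\<alpha> \<inter> \<gamma>) m))"

end

theory Submission
  imports Defs
begin

text \<open>Let $(a,c) \in \alpha$ be joined by a $\beta \circ_{2z+1} \alpha\gamma$ chain, split at its middle
  $\alpha\gamma$-step $b \mathrel{\alpha\gamma} b'$. For $e = p(a,b,b')$ we have $a = p(a,b,b) \mathrel{\alpha\gamma} e$,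
  and applying $p(a,-,-)$ to the two halves gives a $\beta \circ_z \alpha\gamma$ chain from $e$ to
  $p(a,a,c)$; both ends lie in the $\alpha$-class of $a$, so the hypothesis turns it into an
  $\alpha\beta \circ_T \alpha\gamma$ chain. From $p(a,a,c) = j_1(a,a,c)$ to $j_{n+1}(a,a,c) = c$ we pass through
  $j_i(a,a,c)$ and $j_i(a,c,c)$: the map $u \mapsto j_i(a,u,c)$ sends the original chain to an
  $\alpha\beta \circ_{2z+1} \alpha\gamma$ chain, because all its values are $\alpha$-related to $j_i(a,u,a) = a$, and the
  Gumm identities glue consecutive segments, each gluing saving one $\alpha\beta$-step. Hence
  $\alpha(\beta \circ_{2z+1} \alpha\gamma) \subseteq \alpha\beta \circ_{T+2zn} \alpha\gamma$, and iterating $z \mapsto 2z+1$ from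
  $z = 2h+1$ yields the stated bounds. When $T = 0$ the hypothesis already forces $\alpha\beta$ and
  $\alpha\gamma$ to be trivial.\<close>

lemma eval_cong:
  assumes "is_cong ar A \<theta>" "wf_trm ar t" "\<And>v. (\<rho> v, \<rho>' v) \<in> \<theta>"
  shows "(eval A \<rho> t, eval A \<rho>' t) \<in> \<theta>"
  using assms(2)
proof (induction t)
  case (Var v)
  then show ?case using assms(3) by simp
next
  case (App f ts)
  then have "length ts = ar f" "\<forall>i<ar f. (map (eval A \<rho>) ts ! i, map (eval A \<rho>') ts ! i) \<in> \<theta>"
    by (auto dest: nth_mem)
  then show ?case using assms(1) unfolding is_cong_def by simp
qed

lemma ev3_cong:
  assumes "is_cong ar A \<theta>" "wf_trm ar t" "(x, x') \<in> \<theta>" "(y, y') \<in> \<theta>" "(z, z') \<in> \<theta>"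
  shows "(ev3 A t x y z, ev3 A t x' y' z') \<in> \<theta>"
  unfolding ev3_def using assms by (intro eval_cong) auto

lemma is_cong_refl: "is_cong ar A \<theta> \<Longrightarrow> x \<in> carrier A \<Longrightarrow> (x, x) \<in> \<theta>"
  unfolding is_cong_def equiv_def refl_on_def by blast

lemma is_cong_carrier: "is_cong ar A \<theta> \<Longrightarrow> (x, y) \<in> \<theta> \<Longrightarrow> x \<in> carrier A \<and> y \<in> carrier A"
  unfolding is_cong_def equiv_def refl_on_def by blast

lemma is_cong_converse: "is_cong ar A \<theta> \<Longrightarrow> converse \<theta> = \<theta>"
  unfolding is_cong_def equiv_def sym_def by blast

lemma is_cong_relcomp: "is_cong ar A \<theta> \<Longrightarrow> \<theta> O \<theta> \<subseteq> \<theta>"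
  unfolding is_cong_def equiv_def trans_def by blast

lemma is_cong_join: "is_cong ar A \<theta> \<Longrightarrow> (x, z) \<in> \<theta> \<Longrightarrow> (y, z) \<in> \<theta> \<Longrightarrow> (x, y) \<in> \<theta>"
  unfolding is_cong_def equiv_def sym_def trans_def by blast

lemma is_cong_Int:
  assumes "is_cong ar A \<theta>" "is_cong ar A \<theta>'"
  shows "is_cong ar A (\<theta> \<inter> \<theta>')"
proof -
  have "equiv (carrier A) (\<theta> \<inter> \<theta>')"
    using assms unfolding is_cong_def equiv_def refl_on_def sym_def trans_def by blast
  then show ?thesis using assms unfolding is_cong_def by simp
qed

lemma altc_Suc_right: "altc X Y (Suc m) = altc X Y m O (if even m then X else Y)"
proof (induction m arbitrary: X Y)
  case (Suc m)
  have "altc X Y (Suc (Suc m)) = X O altc Y X (Suc m)" by simp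
  also have "\<dots> = X O (altc Y X m O (if even m then Y else X))" using Suc.IH by simp
  finally show ?case by (simp add: O_assoc)
qed simp

lemma altc_add: "altc X Y (m + k) = altc X Y m O (if even m then altc X Y k else altc Y X k)"
  by (induction m arbitrary: X Y) (auto simp: O_assoc)

lemma altc_converse:
  assumes "converse X = X" "converse Y = Y"
  shows "converse (altc X Y m) = (if even m then altc Y X m else altc X Y m)"
  using assms
proof (induction m arbitrary: X Y)
  case (Suc m)
  have "converse (altc X Y (Suc m)) = converse (altc Y X m) O X"
    using Suc.prems by (simp add: converse_relcomp)
  also have "\<dots> = (if even m then altc X Y m else altc Y X m) O X"
    using Suc.IH[of Y X] Suc.prems by simp
  also have "\<dots> = (if even (Suc m) then altc Y X (Suc m) else altc X Y (Suc m))"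
    by (cases "even m") (simp_all only: altc_Suc_right[of X Y] altc_Suc_right[of Y X], simp_all)
  finally show ?case .
qed simp

lemma altc_sym_odd:
  "converse X = X \<Longrightarrow> converse Y = Y \<Longrightarrow> odd m \<Longrightarrow> (u, v) \<in> altc X Y m \<Longrightarrow> (v, u) \<in> altc X Y m"
  using altc_converse[of X Y m] by (metis converse_iff)

lemma altc_swap_even:
  "converse X = X \<Longrightarrow> converse Y = Y \<Longrightarrow> even m \<Longrightarrow> (u, v) \<in> altc X Y m \<Longrightarrow> (v, u) \<in> altc Y X m"
  using altc_converse[of X Y m] by (metis converse_iff)

lemma altc_merge_even:
  assumes "X O X \<subseteq> X" "even m"
  shows "altc X Y (Suc m) O altc X Y (Suc k) \<subseteq> altc X Y (m + Suc k)"
proof -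
  have "altc X Y (Suc m) O altc X Y (Suc k) = altc X Y m O (X O X) O altc Y X k"
    using assms(2) by (simp del: altc.simps(2) add: altc_Suc_right[of X Y m] altc.simps(2)[of X Y k]
      altc.simps(2)[of Y X k] O_assoc)
  also have "\<dots> \<subseteq> altc X Y m O X O altc Y X k"
    using assms(1) by (intro relcomp_mono) auto
  also have "\<dots> = altc X Y (m + Suc k)"
    by (subst altc_add) (simp add: assms(2))
  finally show ?thesis .
qed

lemma altc_merge_odd:
  assumes "Y O Y \<subseteq> Y" "odd m"
  shows "altc X Y (Suc m) O altc Y X (Suc k) \<subseteq> altc X Y (m + Suc k)"
proof -
  have "altc X Y (Suc m) O altc Y X (Suc k) = altc X Y m O (Y O Y) O altc X Y k"
    using assms(2) by (simp del: altc.simps(2) add: altc_Suc_right[of X Y m] altc.simps(2)[of X Y k]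
      altc.simps(2)[of Y X k] O_assoc)
  also have "\<dots> \<subseteq> altc X Y m O Y O altc X Y k"
    using assms(1) by (intro relcomp_mono) auto
  also have "\<dots> = altc X Y (m + Suc k)"
    by (subst altc_add) (simp add: assms(2))
  finally show ?thesis .
qed

lemma altc_map2:
  assumes "\<And>u v u' v'. (u, v) \<in> X \<Longrightarrow> (u', v') \<in> X \<Longrightarrow> (F u u', F v v') \<in> X'"
    and "\<And>u v u' v'. (u, v) \<in> Y \<Longrightarrow> (u', v') \<in> Y \<Longrightarrow> (F u u', F v v') \<in> Y'"
    and "(s, s') \<in> altc X Y m" "(r, r') \<in> altc X Y m"
  shows "(F s r, F s' r') \<in> altc X' Y' m"
  using assms
proof (induction m arbitrary: X Y X' Y' s r)
  case (Suc m)
  from Suc.prems(3,4) obtain s1 r1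
    where step: "(s, s1) \<in> X" "(r, r1) \<in> X" and rest: "(s1, s') \<in> altc Y X m" "(r1, r') \<in> altc Y X m"
    by auto
  have "(F s1 r1, F s' r') \<in> altc Y' X' m"
    using Suc.IH[where X = Y and Y = X and X' = Y' and Y' = X', OF Suc.prems(2) Suc.prems(1) rest] .
  moreover have "(F s r, F s1 r1) \<in> X'" using Suc.prems(1) step .
  ultimately show ?case by auto
qed simp

lemma altc_map:
  assumes "\<And>u v. (u, v) \<in> X \<Longrightarrow> (F u, F v) \<in> X'" "\<And>u v. (u, v) \<in> Y \<Longrightarrow> (F u, F v) \<in> Y'"
    and "(s, s') \<in> altc X Y m"
  shows "(F s, F s') \<in> altc X' Y' m"
  by (rule altc_map2[where F = "\<lambda>u _. F u", OF _ _ assms(3) assms(3)]) (simp_all add: assms(1,2))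

lemma altc_refl: "(x, x) \<in> X \<Longrightarrow> (x, x) \<in> Y \<Longrightarrow> (x, x) \<in> altc X Y m"
  by (induction m arbitrary: X Y) auto

lemma altc_subset_reflcl:
  assumes "Y \<subseteq> Id" "X O X \<subseteq> X"
  shows "altc X Y k \<subseteq> X \<union> Id \<and> altc Y X k \<subseteq> X \<union> Id"
proof (induction k)
  case (Suc k)
  then show ?case using assms by fastforce
qed simp

locale gumm_terms =
  fixes ar :: "'f \<Rightarrow> nat" and A :: "('f, 'a) alg" and n :: nat
    and p :: "('f, nat) trm" and j :: "nat \<Rightarrow> ('f, nat) trm"
  assumes wf_p: "wf_trm ar p"
    and wf_j: "i \<in> {1..Suc n} \<Longrightarrow> wf_trm ar (j i)"
    and j_idem: "i \<in> {1..Suc n} \<Longrightarrow> x \<in> carrier A \<Longrightarrow> y \<in> carrier A \<Longrightarrow> ev3 A (j i) x y x = x"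
    and p_absorb: "x \<in> carrier A \<Longrightarrow> z \<in> carrier A \<Longrightarrow> ev3 A p x z z = x"
    and p_j1: "x \<in> carrier A \<Longrightarrow> z \<in> carrier A \<Longrightarrow> ev3 A p x x z = ev3 A (j 1) x x z"
    and j_odd: "i \<in> {1..n} \<Longrightarrow> odd i \<Longrightarrow> x \<in> carrier A \<Longrightarrow> z \<in> carrier A \<Longrightarrow>
      ev3 A (j i) x z z = ev3 A (j (Suc i)) x z z"
    and j_even: "i \<in> {1..n} \<Longrightarrow> even i \<Longrightarrow> x \<in> carrier A \<Longrightarrow> z \<in> carrier A \<Longrightarrow>
      ev3 A (j i) x x z = ev3 A (j (Suc i)) x x z"
    and j_last: "x \<in> carrier A \<Longrightarrow> y \<in> carrier A \<Longrightarrow> z \<in> carrier A \<Longrightarrow> ev3 A (j (Suc n)) x y z = z"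

lemma has_gumm_termsE:
  fixes U :: "'a itself" and ar :: "'f \<Rightarrow> nat"
  assumes "has_gumm_terms U ar \<Sigma> n"
  obtains p j where "\<And>A :: ('f, 'a) alg. in_var ar \<Sigma> A \<Longrightarrow> gumm_terms ar A n p j"
proof -
  from assms obtain p j where tp: "ternary ar p" and tj: "\<forall>i\<in>{1..n+1}. ternary ar (j i)"
    and ids: "\<forall>A :: ('f, 'a) alg. in_var ar \<Sigma> A \<longrightarrow>
        (\<forall>x\<in>carrier A. \<forall>y\<in>carrier A. \<forall>z\<in>carrier A.
          (\<forall>i\<in>{1..n+1}. ev3 A (j i) x y x = x) \<and>
          ev3 A p x z z = x \<and>
          ev3 A p x x z = ev3 A (j 1) x x z \<and>
          (\<forall>i\<in>{1..n}. odd i \<longrightarrow> ev3 A (j i) x z z = ev3 A (j (i+1)) x z z) \<and>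
          (\<forall>i\<in>{1..n}. even i \<longrightarrow> ev3 A (j i) x x z = ev3 A (j (i+1)) x x z) \<and>
          ev3 A (j (n+1)) x y z = z)"
    unfolding has_gumm_terms_def by blast
  have "gumm_terms ar A n p j" if A: "in_var ar \<Sigma> A" for A :: "('f, 'a) alg"
  proof unfold_locales
    note I = ids[rule_format, OF A]
    show "wf_trm ar p" using tp by (simp add: ternary_def)
    show "wf_trm ar (j i)" if "i \<in> {1..Suc n}" for i using tj that by (simp add: ternary_def)
    show "ev3 A (j i) x y x = x" if "i \<in> {1..Suc n}" "x \<in> carrier A" "y \<in> carrier A" for i x y
      using I[OF that(2,3,2)] that(1) by simp
    show "ev3 A p x z z = x" if "x \<in> carrier A" "z \<in> carrier A" for x z
      using I[OF that(1,2,2)] by simp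
    show "ev3 A p x x z = ev3 A (j 1) x x z" if "x \<in> carrier A" "z \<in> carrier A" for x z
      using I[OF that(1,2,2)] by simp
    show "ev3 A (j i) x z z = ev3 A (j (Suc i)) x z z"
      if "i \<in> {1..n}" "odd i" "x \<in> carrier A" "z \<in> carrier A" for i x z
      using I[OF that(3,4,4)] that(1,2) by simp
    show "ev3 A (j i) x x z = ev3 A (j (Suc i)) x x z"
      if "i \<in> {1..n}" "even i" "x \<in> carrier A" "z \<in> carrier A" for i x z
      using I[OF that(3,3,4)] that(1,2) by simp
    show "ev3 A (j (Suc n)) x y z = z" if "x \<in> carrier A" "y \<in> carrier A" "z \<in> carrier A" for x y z
      using I[OF that] by simp
  qed
  then show thesis by (rule that)
qed

locale gumm_congs = gumm_terms +
  fixes \<alpha> \<beta> \<gamma> :: "('a \<times> 'a) set"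
  assumes cong_\<alpha>: "is_cong ar A \<alpha>" and cong_\<beta>: "is_cong ar A \<beta>" and cong_\<gamma>: "is_cong ar A \<gamma>"
begin

lemma cong_\<alpha>\<beta>: "is_cong ar A (\<alpha> \<inter> \<beta>)" and cong_\<alpha>\<gamma>: "is_cong ar A (\<alpha> \<inter> \<gamma>)"
  by (simp_all add: is_cong_Int cong_\<alpha> cong_\<beta> cong_\<gamma>)

lemma j_alpha:
  assumes "(a, c) \<in> \<alpha>" "i \<in> {1..Suc n}" "u \<in> carrier A"
  shows "(ev3 A (j i) a u c, a) \<in> \<alpha>"
proof -
  have a: "a \<in> carrier A" and "(c, a) \<in> \<alpha>"
    using assms(1) is_cong_carrier[OF cong_\<alpha>] is_cong_converse[OF cong_\<alpha>] by blast+
  then have "(ev3 A (j i) a u c, ev3 A (j i) a u a) \<in> \<alpha>"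
    by (intro ev3_cong[OF cong_\<alpha> wf_j[OF assms(2)]] is_cong_refl[OF cong_\<alpha>] assms(3))
  then show ?thesis using j_idem[OF assms(2) a assms(3)] by simp
qed

lemma j_segment:
  assumes ac: "(a, c) \<in> \<alpha>" and i: "i \<in> {1..Suc n}" and chain: "(a, c) \<in> altc \<beta> (\<alpha> \<inter> \<gamma>) m"
  shows "(ev3 A (j i) a a c, ev3 A (j i) a c c) \<in> altc (\<alpha> \<inter> \<beta>) (\<alpha> \<inter> \<gamma>) m"
proof -
  have a: "a \<in> carrier A" and c: "c \<in> carrier A" using ac is_cong_carrier[OF cong_\<alpha>] by blast+
  have alpha: "(ev3 A (j i) a u c, ev3 A (j i) a v c) \<in> \<alpha>" if "u \<in> carrier A" "v \<in> carrier A" for u v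
    using is_cong_join[OF cong_\<alpha> j_alpha[OF ac i that(1)] j_alpha[OF ac i that(2)]] .
  show ?thesis
  proof (rule altc_map[where F = "\<lambda>u. ev3 A (j i) a u c", OF _ _ chain])
    fix u v assume uv: "(u, v) \<in> \<beta>"
    then have "(ev3 A (j i) a u c, ev3 A (j i) a v c) \<in> \<beta>"
      by (intro ev3_cong[OF cong_\<beta> wf_j[OF i]] is_cong_refl[OF cong_\<beta>] a c)
    with uv show "(ev3 A (j i) a u c, ev3 A (j i) a v c) \<in> \<alpha> \<inter> \<beta>"
      using alpha is_cong_carrier[OF cong_\<beta> uv] by blast
  next
    fix u v assume "(u, v) \<in> \<alpha> \<inter> \<gamma>"
    then show "(ev3 A (j i) a u c, ev3 A (j i) a v c) \<in> \<alpha> \<inter> \<gamma>"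
      by (intro ev3_cong[OF cong_\<alpha>\<gamma> wf_j[OF i]] is_cong_refl[OF cong_\<alpha>\<gamma>] a c)
  qed
qed

lemma j_path:
  assumes ac: "(a, c) \<in> \<alpha>" and chain: "(a, c) \<in> altc \<beta> (\<alpha> \<inter> \<gamma>) (Suc k)" and k: "even k"
  shows "(ev3 A p a a c, c) \<in> altc (\<alpha> \<inter> \<beta>) (\<alpha> \<inter> \<gamma>) (Suc (k * n))"
proof -
  have a: "a \<in> carrier A" and c: "c \<in> carrier A" using ac is_cong_carrier[OF cong_\<alpha>] by blast+
  define w where "w l = (if odd l then ev3 A (j l) a a c else ev3 A (j l) a c c)" for l
  have segment: "(w l, w (Suc l)) \<in> altc (\<alpha> \<inter> \<beta>) (\<alpha> \<inter> \<gamma>) (Suc k)" if l: "l \<in> {1..n}" for l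
  proof (cases "odd l")
    case True
    then have "w (Suc l) = ev3 A (j l) a c c" using j_odd[OF l True a c] by (simp add: w_def)
    then show ?thesis using j_segment[OF ac _ chain] l True by (simp add: w_def)
  next
    case False
    have seg: "(ev3 A (j l) a a c, ev3 A (j l) a c c) \<in> altc (\<alpha> \<inter> \<beta>) (\<alpha> \<inter> \<gamma>) (Suc k)"
      using j_segment[OF ac _ chain] l by simp
    have "(ev3 A (j l) a c c, ev3 A (j l) a a c) \<in> altc (\<alpha> \<inter> \<beta>) (\<alpha> \<inter> \<gamma>) (Suc k)"
      by (rule altc_sym_odd[OF is_cong_converse[OF cong_\<alpha>\<beta>] is_cong_converse[OF cong_\<alpha>\<gamma>] _ seg]) (simp add: k)
    moreover have "w (Suc l) = ev3 A (j l) a a c" using j_even[OF l _ a c] False by (simp add: w_def)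
    ultimately show ?thesis using False by (simp add: w_def)
  qed
  have "(w 1, w (Suc l)) \<in> altc (\<alpha> \<inter> \<beta>) (\<alpha> \<inter> \<gamma>) (Suc (k * l))" if "l \<le> n" for l
    using that
  proof (induction l)
    case 0
    have "w 1 \<in> carrier A"
      using j_alpha[OF ac _ a, of 1] is_cong_carrier[OF cong_\<alpha>] by (simp add: w_def)
    then show ?case using is_cong_refl[OF cong_\<alpha>\<beta>] by simp
  next
    case (Suc l)
    then have "(w 1, w (Suc (Suc l))) \<in> altc (\<alpha> \<inter> \<beta>) (\<alpha> \<inter> \<gamma>) (Suc (k * l)) O altc (\<alpha> \<inter> \<beta>) (\<alpha> \<inter> \<gamma>) (Suc k)"
      using segment[of "Suc l"] by auto
    also have "\<dots> \<subseteq> altc (\<alpha> \<inter> \<beta>) (\<alpha> \<inter> \<gamma>) (k * l + Suc k)"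
      using k by (intro altc_merge_even is_cong_relcomp[OF cong_\<alpha>\<beta>]) simp
    finally show ?case by (simp add: algebra_simps)
  qed
  moreover have "w 1 = ev3 A p a a c" using p_j1[OF a c] by (simp add: w_def)
  moreover have "w (Suc n) = c" using j_last[OF a a c] j_last[OF a c c] by (simp add: w_def)
  ultimately show ?thesis using order_refl[of n] by metis
qed

lemma p_path:
  assumes hyp: "\<alpha> \<inter> altc \<beta> (\<alpha> \<inter> \<gamma>) z \<subseteq> altc (\<alpha> \<inter> \<beta>) (\<alpha> \<inter> \<gamma>) T"
    and z: "odd z" and T: "even T"
    and ac: "(a, c) \<in> \<alpha>" and chain: "(a, c) \<in> altc \<beta> (\<alpha> \<inter> \<gamma>) (2 * z + 1)"
  shows "(a, ev3 A p a a c) \<in> (\<alpha> \<inter> \<gamma>) O altc (\<alpha> \<inter> \<gamma>) (\<alpha> \<inter> \<beta>) T"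
proof -
  have a: "a \<in> carrier A" and c: "c \<in> carrier A" using ac is_cong_carrier[OF cong_\<alpha>] by blast+
  have "(a, c) \<in> altc \<beta> (\<alpha> \<inter> \<gamma>) (z + Suc z)"
    using chain by (simp add: mult_2)
  then have "(a, c) \<in> altc \<beta> (\<alpha> \<inter> \<gamma>) z O ((\<alpha> \<inter> \<gamma>) O altc \<beta> (\<alpha> \<inter> \<gamma>) z)"
    by (simp only: altc_add altc.simps(2)) (simp add: z)
  then obtain b b' where ab: "(a, b) \<in> altc \<beta> (\<alpha> \<inter> \<gamma>) z" and bb': "(b, b') \<in> \<alpha> \<inter> \<gamma>"
    and b'c: "(b', c) \<in> altc \<beta> (\<alpha> \<inter> \<gamma>) z"
    by blast
  have b: "b \<in> carrier A" using bb' is_cong_carrier[OF cong_\<alpha>\<gamma>] by blast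
  define e where "e = ev3 A p a b b'"
  have ae: "(a, e) \<in> \<alpha> \<inter> \<gamma>"
  proof -
    have "(ev3 A p a b b, e) \<in> \<alpha> \<inter> \<gamma>"
      unfolding e_def using bb' by (intro ev3_cong[OF cong_\<alpha>\<gamma> wf_p] is_cong_refl[OF cong_\<alpha>\<gamma>] a b)
    then show ?thesis using p_absorb[OF a b] by simp
  qed
  have ba: "(b, a) \<in> altc \<beta> (\<alpha> \<inter> \<gamma>) z"
    by (rule altc_sym_odd[OF is_cong_converse[OF cong_\<beta>] is_cong_converse[OF cong_\<alpha>\<gamma>] z ab])
  have "(e, ev3 A p a a c) \<in> altc \<beta> (\<alpha> \<inter> \<gamma>) z"
    unfolding e_def
  proof (rule altc_map2[where F = "ev3 A p a", OF _ _ ba b'c])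
    fix u v u' v' assume "(u, v) \<in> \<beta>" "(u', v') \<in> \<beta>"
    then show "(ev3 A p a u u', ev3 A p a v v') \<in> \<beta>"
      by (intro ev3_cong[OF cong_\<beta> wf_p] is_cong_refl[OF cong_\<beta>] a)
  next
    fix u v u' v' assume "(u, v) \<in> \<alpha> \<inter> \<gamma>" "(u', v') \<in> \<alpha> \<inter> \<gamma>"
    then show "(ev3 A p a u u', ev3 A p a v v') \<in> \<alpha> \<inter> \<gamma>"
      by (intro ev3_cong[OF cong_\<alpha>\<gamma> wf_p] is_cong_refl[OF cong_\<alpha>\<gamma>] a)
  qed
  then have "(ev3 A p a a c, e) \<in> altc \<beta> (\<alpha> \<inter> \<gamma>) z"
    by (rule altc_sym_odd[OF is_cong_converse[OF cong_\<beta>] is_cong_converse[OF cong_\<alpha>\<gamma>] z])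
  moreover have "(ev3 A p a a c, e) \<in> \<alpha>"
    using is_cong_join[OF cong_\<alpha> j_alpha[OF ac _ a, of 1]] ae p_j1[OF a c]
      is_cong_converse[OF cong_\<alpha>] by auto
  ultimately have "(ev3 A p a a c, e) \<in> altc (\<alpha> \<inter> \<beta>) (\<alpha> \<inter> \<gamma>) T"
    using hyp by blast
  then have "(e, ev3 A p a a c) \<in> altc (\<alpha> \<inter> \<gamma>) (\<alpha> \<inter> \<beta>) T"
    by (rule altc_swap_even[OF is_cong_converse[OF cong_\<alpha>\<beta>] is_cong_converse[OF cong_\<alpha>\<gamma>] T])
  with ae show ?thesis by blast
qed

lemma inter_altc_double:
  assumes hyp: "\<alpha> \<inter> altc \<beta> (\<alpha> \<inter> \<gamma>) z \<subseteq> altc (\<alpha> \<inter> \<beta>) (\<alpha> \<inter> \<gamma>) T"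
    and z: "odd z" and T: "even T" "T \<noteq> 0"
  shows "\<alpha> \<inter> altc \<beta> (\<alpha> \<inter> \<gamma>) (2 * z + 1) \<subseteq> altc (\<alpha> \<inter> \<beta>) (\<alpha> \<inter> \<gamma>) (T + 2 * z * n)"
proof (clarify)
  fix a c assume ac: "(a, c) \<in> \<alpha>" and chain: "(a, c) \<in> altc \<beta> (\<alpha> \<inter> \<gamma>) (2 * z + 1)"
  \<comment> \<open>The construction yields a chain starting with an \<open>\<alpha> \<inter> \<gamma>\<close>-step, so run it from \<open>c\<close> to \<open>a\<close>
    and reverse it at the end (its length is even).\<close>
  have ca: "(c, a) \<in> \<alpha>" using ac is_cong_converse[OF cong_\<alpha>] by blast
  have chain': "(c, a) \<in> altc \<beta> (\<alpha> \<inter> \<gamma>) (2 * z + 1)"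
    by (rule altc_sym_odd[OF is_cong_converse[OF cong_\<beta>] is_cong_converse[OF cong_\<alpha>\<gamma>] _ chain]) simp
  obtain T' where T': "T = Suc T'" "odd T'" using T by (cases T) auto
  have "(c, ev3 A p c c a) \<in> (\<alpha> \<inter> \<gamma>) O altc (\<alpha> \<inter> \<gamma>) (\<alpha> \<inter> \<beta>) T"
    by (rule p_path[OF hyp z T(1) ca chain'])
  also have "\<dots> \<subseteq> altc (\<alpha> \<inter> \<gamma>) (\<alpha> \<inter> \<beta>) T"
    using altc_merge_even[OF is_cong_relcomp[OF cong_\<alpha>\<gamma>], of 0 "\<alpha> \<inter> \<beta>" T'] T'(1) by simp
  finally have "(c, ev3 A p c c a) \<in> altc (\<alpha> \<inter> \<gamma>) (\<alpha> \<inter> \<beta>) (Suc T')"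
    using T'(1) by simp
  moreover have "(ev3 A p c c a, a) \<in> altc (\<alpha> \<inter> \<beta>) (\<alpha> \<inter> \<gamma>) (Suc (2 * z * n))"
    using j_path[OF ca _ , of "2 * z"] chain' by simp
  ultimately have "(c, a) \<in> altc (\<alpha> \<inter> \<gamma>) (\<alpha> \<inter> \<beta>) (T' + Suc (2 * z * n))"
    using altc_merge_odd[OF is_cong_relcomp[OF cong_\<alpha>\<beta>] T'(2)] by blast
  then have ca_path: "(c, a) \<in> altc (\<alpha> \<inter> \<gamma>) (\<alpha> \<inter> \<beta>) (T + 2 * z * n)"
    using T'(1) by simp
  show "(a, c) \<in> altc (\<alpha> \<inter> \<beta>) (\<alpha> \<inter> \<gamma>) (T + 2 * z * n)"
    by (rule altc_swap_even[OF is_cong_converse[OF cong_\<alpha>\<gamma>] is_cong_converse[OF cong_\<alpha>\<beta>] _ ca_path])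
      (simp add: T)
qed

end

lemma inter_altc_subset_Id:
  assumes \<alpha>: "is_cong ar A \<alpha>" and \<beta>: "is_cong ar A \<beta>" and \<gamma>: "is_cong ar A \<gamma>"
    and z: "2 \<le> z" and hyp: "\<alpha> \<inter> altc \<beta> (\<alpha> \<inter> \<gamma>) z \<subseteq> Id"
  shows "\<alpha> \<inter> altc \<beta> (\<alpha> \<inter> \<gamma>) k \<subseteq> Id"
proof -
  obtain z' where z': "z = Suc (Suc z')" using z by (metis add_2_eq_Suc le_Suc_ex)
  have \<alpha>\<gamma>: "is_cong ar A (\<alpha> \<inter> \<gamma>)" using \<alpha> \<gamma> by (rule is_cong_Int)
  have "(u, v) \<in> Id" if uv: "(u, v) \<in> \<alpha> \<inter> \<gamma>" for u v
  proof -
    have u: "u \<in> carrier A" and v: "v \<in> carrier A" using is_cong_carrier[OF \<alpha>\<gamma> uv] by auto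
    have "(u, u) \<in> \<beta>" using u by (rule is_cong_refl[OF \<beta>])
    moreover have "(v, v) \<in> altc \<beta> (\<alpha> \<inter> \<gamma>) z'"
      by (intro altc_refl is_cong_refl[OF \<beta>] is_cong_refl[OF \<alpha>\<gamma>] v)
    ultimately have "(u, v) \<in> altc \<beta> (\<alpha> \<inter> \<gamma>) z" using uv z' by auto
    then show ?thesis using hyp uv by blast
  qed
  then have \<alpha>\<gamma>_Id: "\<alpha> \<inter> \<gamma> \<subseteq> Id" by auto
  have "(u, v) \<in> Id" if uv: "(u, v) \<in> \<alpha> \<inter> \<beta>" for u v
  proof -
    have v: "v \<in> carrier A" using is_cong_carrier[OF \<beta>] uv by blast
    have "(v, v) \<in> altc (\<alpha> \<inter> \<gamma>) \<beta> (Suc z')"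
      by (intro altc_refl is_cong_refl[OF \<beta>] is_cong_refl[OF \<alpha>\<gamma>] v)
    then have "(u, v) \<in> altc \<beta> (\<alpha> \<inter> \<gamma>) z" using uv z' by auto
    then show ?thesis using hyp uv by blast
  qed
  moreover have "altc \<beta> (\<alpha> \<inter> \<gamma>) k \<subseteq> \<beta> \<union> Id"
    using altc_subset_reflcl[OF \<alpha>\<gamma>_Id is_cong_relcomp[OF \<beta>]] by blast
  ultimately show ?thesis by auto
qed

lemma sat_incl_double:
  fixes U :: "'a itself" and ar :: "'f \<Rightarrow> nat"
  assumes gumm: "has_gumm_terms U ar \<Sigma> n" and hyp: "sat_incl U ar \<Sigma> z T"
    and z: "odd z" "3 \<le> z" and T: "even T"
  shows "sat_incl U ar \<Sigma> (2 * z + 1) (T + 2 * z * n)"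
proof -
  obtain p j where gt: "\<And>A :: ('f, 'a) alg. in_var ar \<Sigma> A \<Longrightarrow> gumm_terms ar A n p j"
    using has_gumm_termsE[OF gumm] by blast
  show ?thesis unfolding sat_incl_def
  proof (intro allI impI)
    fix A :: "('f, 'a) alg" and \<alpha> \<beta> \<gamma>
    assume A: "in_var ar \<Sigma> A"
      and \<alpha>: "is_cong ar A \<alpha>" and \<beta>: "is_cong ar A \<beta>" and \<gamma>: "is_cong ar A \<gamma>"
    interpret gumm_congs ar A n p j \<alpha> \<beta> \<gamma>
      using gt[OF A] \<alpha> \<beta> \<gamma> by (simp add: gumm_congs_def gumm_congs_axioms_def)
    have h: "\<alpha> \<inter> altc \<beta> (\<alpha> \<inter> \<gamma>) z \<subseteq> altc (\<alpha> \<inter> \<beta>) (\<alpha> \<inter> \<gamma>) T"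
      using hyp A \<alpha> \<beta> \<gamma> unfolding sat_incl_def by blast
    show "\<alpha> \<inter> altc \<beta> (\<alpha> \<inter> \<gamma>) (2 * z + 1) \<subseteq> altc (\<alpha> \<inter> \<beta>) (\<alpha> \<inter> \<gamma>) (T + 2 * z * n)"
    proof (cases "T = 0")
      case False
      show ?thesis using inter_altc_double[OF h z(1) T False] .
    next
      case True
      show ?thesis
      proof clarify
        fix a c assume ac: "(a, c) \<in> \<alpha>" "(a, c) \<in> altc \<beta> (\<alpha> \<inter> \<gamma>) (2 * z + 1)"
        have "\<alpha> \<inter> altc \<beta> (\<alpha> \<inter> \<gamma>) (2 * z + 1) \<subseteq> Id"
          by (rule inter_altc_subset_Id[OF \<alpha> \<beta> \<gamma> _ h[unfolded True altc.simps(1)]]) (use z in simp)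
        then have "a = c" using ac by blast
        moreover have a: "a \<in> carrier A" using is_cong_carrier[OF \<alpha> ac(1)] by blast
        have "(a, a) \<in> altc (\<alpha> \<inter> \<beta>) (\<alpha> \<inter> \<gamma>) (T + 2 * z * n)"
          by (intro altc_refl is_cong_refl[OF cong_\<alpha>\<beta>] is_cong_refl[OF cong_\<alpha>\<gamma>] a)
        ultimately show "(a, c) \<in> altc (\<alpha> \<inter> \<beta>) (\<alpha> \<inter> \<gamma>) (T + 2 * z * n)" by simp
      qed
    qed
  qed
qed

lemma sat_incl_iterate_double:
  fixes U :: "'a itself" and ar :: "'f \<Rightarrow> nat"
  assumes gumm: "has_gumm_terms U ar \<Sigma> n" and hyp: "sat_incl U ar \<Sigma> z T"
    and z: "odd z" "3 \<le> z" and T: "even T"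
  shows "sat_incl U ar \<Sigma> (2 ^ q * (z + 1) - 1) (T + 2 * n * ((2 ^ q - 1) * (z + 1) - q))"
proof (induction q)
  case 0
  then show ?case using hyp by simp
next
  case (Suc q)
  define w where "w = z + 1"
  obtain m where M: "2 ^ q = Suc m" using not0_implies_Suc[of "2 ^ q :: nat"] by auto
  have "q \<le> m" using less_exp[of q] M by simp
  also have "m \<le> m * w" using w_def by simp
  finally obtain d where d: "m * w = q + d" using le_Suc_ex by blast
  define z' where "z' = 2 ^ q * w - 1"
  have z'_eq: "z' = q + d + w - 1" using M d by (simp add: z'_def)
  have "Suc z' = 2 ^ q * w" using z(2) by (simp add: z'_def w_def)
  moreover have "even w" using z(1) by (simp add: w_def)
  ultimately have "odd z'" by (metis even_Suc even_mult_iff)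
  moreover have "3 \<le> z'" using z(2) z'_eq w_def by simp
  moreover have "sat_incl U ar \<Sigma> z' (T + 2 * n * d)"
    using Suc.IH M d by (simp add: z'_def w_def)
  ultimately have step: "sat_incl U ar \<Sigma> (2 * z' + 1) (T + 2 * n * d + 2 * z' * n)"
    using sat_incl_double[OF gumm] T by simp
  have e1: "2 * z' + 1 = 2 ^ Suc q * w - 1" using M d z'_eq w_def by simp
  have e2: "(2 ^ Suc q - 1) * w - Suc q = q + 2 * d + z"
  proof -
    have "2 ^ Suc q - 1 = Suc (2 * m)" using M by simp
    then have "(2 ^ Suc q - 1) * w = w + 2 * (m * w)" by simp
    then show ?thesis using d w_def by simp
  qed
  have e3: "T + 2 * n * d + 2 * z' * n = T + 2 * n * (q + 2 * d + z)"
    using z'_eq w_def by (simp add: algebra_simps)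
  have "sat_incl U ar \<Sigma> (2 ^ Suc q * w - 1) (T + 2 * n * ((2 ^ Suc q - 1) * w - Suc q))"
    using step unfolding e1 e2 e3 .
  then show ?case by (simp only: w_def)
qed

lemma doubling_length_eq:
  fixes h n p :: nat
  assumes "1 \<le> p"
  shows "2 * n * ((2 ^ (p - 1) - 1) * (2 * h + 1 + 1) - (p - 1)) =
    (2 ^ (p + 1) - 4) * h * n + (2 ^ (p + 1) - 2 * p - 2) * n"
proof -
  obtain q where p: "p = Suc q" using assms by (cases p) auto
  obtain m where M: "2 ^ q = Suc m" using not0_implies_Suc[of "2 ^ q :: nat"] by auto
  obtain d where d: "m = q + d" using less_exp[of q] M le_Suc_ex by (metis less_Suc_eq_le)
  have "2 ^ (p + 1) = 4 * q + 4 * d + 4" using p M d by simp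
  then show ?thesis using p M d by (simp add: algebra_simps)
qed

theorem corollary4p9:
  fixes ar :: "'f \<Rightarrow> nat"
    and \<Sigma> :: "(('f, nat) trm \<times> ('f, nat) trm) set"
    and U :: "'a itself"
    and n h t :: nat
  assumes "\<forall>(s, u)\<in>\<Sigma>. wf_trm ar s \<and> wf_trm ar u"
    and "h \<ge> 1" and "even t"
    and "has_gumm_terms U ar \<Sigma> n"
    and "sat_incl U ar \<Sigma> (2*h+1) t"
  shows "sat_incl U ar \<Sigma> (4*h+3) (t + (4*h+2)*n) \<and>
    (\<forall>p\<ge>1. sat_incl U ar \<Sigma> (2^p*(h+1) - 1)
       (t + (2^(p+1) - 4)*h*n + (2^(p+1) - 2*p - 2)*n))"
proof -
  have z: "odd (2 * h + 1)" "3 \<le> 2 * h + 1" using assms(2) by simp_all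
  have general: "sat_incl U ar \<Sigma> (2^p*(h+1) - 1) (t + (2^(p+1) - 4)*h*n + (2^(p+1) - 2*p - 2)*n)"
    if p: "p \<ge> 1" for p
  proof -
    have "sat_incl U ar \<Sigma> (2 ^ (p - 1) * (2 * h + 1 + 1) - 1)
        (t + 2 * n * ((2 ^ (p - 1) - 1) * (2 * h + 1 + 1) - (p - 1)))"
      by (rule sat_incl_iterate_double[OF assms(4,5) z assms(3)])
    moreover have "2 ^ (p - 1) * (2 * h + 1 + 1) = 2 ^ p * (h + 1)"
      using p by (cases p) simp_all
    ultimately show ?thesis unfolding add.assoc doubling_length_eq[OF p, symmetric] by simp
  qed
  have "2^2*(h+1) - 1 = 4*h+3" "t + (2^(2+1) - 4)*h*n + (2^(2+1) - 2*2 - 2)*n = t + (4*h+2)*n"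
    by (simp_all add: algebra_simps)
  then have "sat_incl U ar \<Sigma> (4*h+3) (t + (4*h+2)*n)"
    using general[of 2] by (simp only: one_le_numeral)
  with general show ?thesis by blast
qed

end
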